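(* Let $K$ be a locally compact Hausdorff space and $X$ a strictly convex real Banach space. Let $t_0\in K$ and $x_0\in S_X$. Then $A(t_0,x_0)=\{f\in S_{C_0(K,X)}: f(t_0)=x_0\}$ is a maximal norm-closed proper face of $B_{C_0(K,X)}$, equivalently, a maximal convex subset of $S_{C_0(K,X)}$.
   Context: All Banach spaces are real. $C_0(K,X)$ is the Banach space of continuous functions $K\to X$ vanishing at infinity, with sup norm. A Banach space is strictly convex if every point of its unit sphere is an extreme point of its closed unit ball. *)

theory Defs
  imports "HOL-Analysis.Analysis"
begin

definition strictly_convex_space :: "'x::real_normed_vector itself \<Rightarrow> bool" where
  "strictly_convex_space _ \<longleftrightarrow>
     (\<forall>x::'x. norm x = 1 \<longrightarrow> x extreme_point_of cball 0 1)"

text \<open>C_0(K,X): bounded continuous functions vanishing at infinity, as a subset of the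
  Banach space of bounded continuous functions with the sup norm.\<close>
definition C0 :: "('k::topological_space \<Rightarrow>\<^sub>C 'x::real_normed_vector) set" where
  "C0 = {f. \<forall>e>0. compact {t. e \<le> norm (apply_bcontfun f t)}}"

definition C0_ball :: "('k::topological_space \<Rightarrow>\<^sub>C 'x::real_normed_vector) set" where
  "C0_ball = C0 \<inter> cball 0 1"

definition C0_sphere :: "('k::topological_space \<Rightarrow>\<^sub>C 'x::real_normed_vector) set" where
  "C0_sphere = C0 \<inter> sphere 0 1"

definition closed_proper_face :: "('k::topological_space \<Rightarrow>\<^sub>C 'x::real_normed_vector) set \<Rightarrow> bool" where
  "closed_proper_face F \<longleftrightarrow>
     F face_of C0_ball \<and> closedin (top_of_set C0) F \<and> F \<noteq> {} \<and> F \<noteq> C0_ball"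

definition maximal_closed_proper_face :: "('k::topological_space \<Rightarrow>\<^sub>C 'x::real_normed_vector) set \<Rightarrow> bool" where
  "maximal_closed_proper_face F \<longleftrightarrow>
     closed_proper_face F \<and> (\<forall>G. closed_proper_face G \<and> F \<subseteq> G \<longrightarrow> G = F)"

definition maximal_convex_subset_of_sphere :: "('k::topological_space \<Rightarrow>\<^sub>C 'x::real_normed_vector) set \<Rightarrow> bool" where
  "maximal_convex_subset_of_sphere F \<longleftrightarrow>
     convex F \<and> F \<subseteq> C0_sphere \<and> (\<forall>G. convex G \<and> G \<subseteq> C0_sphere \<and> F \<subseteq> G \<longrightarrow> G = F)"

end

theory Submission
  imports Defs
begin

text \<open>Evaluation at \<open>t\<^sub>0\<close> maps \<open>A(t\<^sub>0,x\<^sub>0)\<close> onto the extreme point \<open>x\<^sub>0\<close>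
  of the unit ball of \<open>X\<close>, so \<open>A(t\<^sub>0,x\<^sub>0)\<close> is a face. A proper face of the unit ball
  contains no point of norm \<open>< 1\<close> (it could be extended beyond such a point in every
  direction), so every closed proper face is a convex subset of the sphere and both
  maximality claims reduce to one.
  Maximality: if a convex subset \<open>G\<close> of the sphere containing \<open>A(t\<^sub>0,x\<^sub>0)\<close> had some \<open>g\<close>
  with \<open>g(t\<^sub>0) \<noteq> x\<^sub>0\<close>, then by strict convexity \<open>\<parallel>(x\<^sub>0 + g(t\<^sub>0))/2\<parallel> < 1\<close>, hence
  \<open>\<parallel>(x\<^sub>0 + g(t))/2\<parallel> < 1 - \<delta>\<close> on a neighbourhood \<open>W\<close> of \<open>t\<^sub>0\<close>. A Urysohn bump \<open>\<phi>\<close>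
  supported in \<open>W\<close> with \<open>\<phi>(t\<^sub>0) = 1\<close> gives \<open>f = \<phi> x\<^sub>0 \<in> A(t\<^sub>0,x\<^sub>0)\<close>, and then the
  midpoint of \<open>f\<close> and \<open>g\<close> has norm at most \<open>1 - \<delta>\<close>, although it lies in \<open>G\<close>.\<close>

lemma Hausdorff_space_euclidean_t2: "Hausdorff_space (euclidean :: 'a::t2_space topology)"
  unfolding Hausdorff_space_def disjnt_def using hausdorff by fastforce

lemma locally_compact_bump_function:
  fixes t0 :: "'k::t2_space"
  assumes lc: "locally_compact_space (euclidean :: 'k topology)" and W: "open W" "t0 \<in> W"
  obtains \<phi> :: "'k \<Rightarrow> real" where "continuous_on UNIV \<phi>" "\<And>t. \<phi> t \<in> {0..1}" "\<phi> t0 = 1"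
    "\<And>t. t \<notin> W \<Longrightarrow> \<phi> t = 0" "\<And>e. e > 0 \<Longrightarrow> compact {t. e \<le> \<phi> t}"
proof -
  have "\<exists>U C. open U \<and> compact C \<and> t0 \<in> U \<and> U \<subseteq> C"
    using lc unfolding locally_compact_space_def compactin_euclidean_iff by auto
  then obtain U C where U: "open U" "compact C" "t0 \<in> U" "U \<subseteq> C"
    by blast
  have "completely_regular_space (euclidean :: 'k topology)"
    using lc Hausdorff_space_euclidean_t2 by (rule locally_compact_regular_imp_completely_regular_space[OF _ disjI1])
  moreover have "closedin euclidean (- (U \<inter> W))" "t0 \<notin> - (U \<inter> W)"
    using U W by auto
  ultimately obtain f :: "'k \<Rightarrow> real" where f: "continuous_map euclidean (top_of_set {0..1}) f"
     "f t0 = 0" "f ` (- (U \<inter> W)) \<subseteq> {1}"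
    unfolding completely_regular_space_def by (metis DiffI UNIV_I topspace_euclidean)
  then have f_cont: "continuous_on UNIV f" and f_range: "\<And>t. f t \<in> {0..1}"
    by (auto simp: continuous_map_in_subtopology)
  show ?thesis
  proof
    show "continuous_on UNIV (\<lambda>t. 1 - f t)"
      using f_cont by (intro continuous_intros)
    show "1 - f t \<in> {0..1}" for t
      using f_range[of t] by auto
    show "1 - f t0 = 1" "t \<notin> W \<Longrightarrow> 1 - f t = 0" for t
      using f by auto
    show "compact {t. e \<le> 1 - f t}" if "e > 0" for e
    proof -
      have "{t. e \<le> 1 - f t} = C \<inter> {t. e \<le> 1 - f t}"
        using that f(3) U(4) by force
      moreover have "closed {t. e \<le> 1 - f t}"
        using f_cont by (intro closed_Collect_le continuous_intros) auto
      ultimately show ?thesis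
        using U(2) compact_Int_closed by metis
    qed
  qed
qed

lemma bounded_linear_apply_bcontfun_at:
  "bounded_linear (\<lambda>f::'a::topological_space \<Rightarrow>\<^sub>C 'b::real_normed_vector. apply_bcontfun f t)"
  by (rule bounded_linear_intro[where K=1]) (auto simp: norm_bounded)

lemma subspace_C0: "subspace (C0 :: ('k::topological_space \<Rightarrow>\<^sub>C 'x::real_normed_vector) set)"
  unfolding subspace_def
proof (intro conjI ballI allI)
  have compact_C0: "compact {t. e \<le> norm (apply_bcontfun f t)}" if "f \<in> C0" "e > 0" for f :: "'k \<Rightarrow>\<^sub>C 'x" and e
    using that by (simp add: C0_def)
  have closed_level: "closed {t. e \<le> norm (apply_bcontfun f t)}" for f :: "'k \<Rightarrow>\<^sub>C 'x" and e
    by (intro closed_Collect_le continuous_intros) auto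
  show "0 \<in> C0"
    by (simp add: C0_def)
  show "f + g \<in> C0" if "f \<in> C0" "g \<in> C0" for f g :: "'k \<Rightarrow>\<^sub>C 'x"
    unfolding C0_def
  proof (intro CollectI allI impI)
    fix e :: real assume "e > 0"
    have "{t. e \<le> norm (apply_bcontfun (f + g) t)} \<subseteq>
        {t. e/2 \<le> norm (apply_bcontfun f t)} \<union> {t. e/2 \<le> norm (apply_bcontfun g t)}"
    proof
      fix t assume "t \<in> {t. e \<le> norm (apply_bcontfun (f + g) t)}"
      then have "e \<le> norm (apply_bcontfun f t) + norm (apply_bcontfun g t)"
        using norm_triangle_ineq[of "apply_bcontfun f t" "apply_bcontfun g t"] by simp
      then show "t \<in> {t. e/2 \<le> norm (apply_bcontfun f t)} \<union> {t. e/2 \<le> norm (apply_bcontfun g t)}"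
        by auto
    qed
    moreover have "compact ({t. e/2 \<le> norm (apply_bcontfun f t)} \<union> {t. e/2 \<le> norm (apply_bcontfun g t)})"
      using compact_C0[OF that(1), of "e/2"] compact_C0[OF that(2), of "e/2"] \<open>e > 0\<close>
      by (intro compact_Un) auto
    ultimately show "compact {t. e \<le> norm (apply_bcontfun (f + g) t)}"
      using closed_level compact_Int_closed inf.absorb_iff2 by metis
  qed
  show "c *\<^sub>R f \<in> C0" if "f \<in> C0" for c and f :: "'k \<Rightarrow>\<^sub>C 'x"
  proof (cases "c = 0")
    case False
    have "{t. e \<le> norm (apply_bcontfun (c *\<^sub>R f) t)} = {t. e / \<bar>c\<bar> \<le> norm (apply_bcontfun f t)}" for e
      using False by (auto simp: field_simps)
    then show ?thesis
      using that False by (simp add: C0_def)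
  qed (simp add: C0_def)
qed

lemma C0_sphere_bump:
  fixes t0 :: "'k::t2_space" and x0 :: "'x::real_normed_vector"
  assumes "locally_compact_space (euclidean :: 'k topology)" "open W" "t0 \<in> W" "norm x0 = 1"
  obtains f :: "'k \<Rightarrow>\<^sub>C 'x" and \<phi> where "f \<in> C0_sphere" "apply_bcontfun f = (\<lambda>t. \<phi> t *\<^sub>R x0)"
    "\<phi> t0 = 1" "\<And>t. \<phi> t \<in> {0..1}" "\<And>t. t \<notin> W \<Longrightarrow> \<phi> t = 0"
proof -
  obtain \<phi> :: "'k \<Rightarrow> real" where \<phi>: "continuous_on UNIV \<phi>" "\<And>t. \<phi> t \<in> {0..1}" "\<phi> t0 = 1"
    "\<And>t. t \<notin> W \<Longrightarrow> \<phi> t = 0" "\<And>e. e > 0 \<Longrightarrow> compact {t. e \<le> \<phi> t}"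
    using locally_compact_bump_function[OF assms(1-3)] by metis
  define f where "f = Bcontfun (\<lambda>t. \<phi> t *\<^sub>R x0)"
  have "(\<lambda>t. \<phi> t *\<^sub>R x0) \<in> bcontfun"
    using \<phi>(1,2) assms(4) by (intro bcontfun_normI[where b=1] continuous_intros) auto
  then have f_apply: "apply_bcontfun f = (\<lambda>t. \<phi> t *\<^sub>R x0)"
    by (simp add: f_def Bcontfun_inverse)
  have "f \<in> C0"
    using \<phi>(2,5) assms(4) by (simp add: C0_def f_apply)
  moreover have "norm f = 1"
  proof (rule antisym)
    show "norm f \<le> 1"
      using \<phi>(2) assms(4) by (intro norm_bound) (simp add: f_apply)
    show "1 \<le> norm f"
      using norm_bounded[of f t0] \<phi>(3) assms(4) by (simp add: f_apply)
  qed
  ultimately show ?thesis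
    using that f_apply \<phi>(2-4) by (simp add: C0_sphere_def)
qed

lemma face_of_linear_preimage:
  assumes "linear L" "F face_of S" "convex T" "L ` T \<subseteq> S"
  shows "{x \<in> T. L x \<in> F} face_of T"
  unfolding face_of_def
proof (intro conjI ballI impI)
  show "{x \<in> T. L x \<in> F} \<subseteq> T"
    by blast
  show "convex {x \<in> T. L x \<in> F}"
    using convex_linear_vimage[OF assms(1) face_of_imp_convex[OF assms(2)]] assms(3)
    by (simp add: Collect_conj_eq convex_Int vimage_def)
  fix a b x
  assume a: "a \<in> T" and b: "b \<in> T" and x: "x \<in> {x \<in> T. L x \<in> F}" and "x \<in> open_segment a b"
  then obtain u where u: "0 < u" "u < 1" "x = (1 - u) *\<^sub>R a + u *\<^sub>R b"
    by (auto simp: in_segment)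
  have Lx: "L x = (1 - u) *\<^sub>R L a + u *\<^sub>R L b"
    using u(3) linear_add[OF assms(1)] linear_scale[OF assms(1)] by simp
  have "L a \<in> F \<and> L b \<in> F"
  proof (cases "L a = L b")
    case True
    then show ?thesis
      using x Lx by (simp add: scaleR_add_left[symmetric])
  next
    case False
    then have "L x \<in> open_segment (L a) (L b)"
      using u Lx by (auto simp: in_segment)
    then show ?thesis
      using face_ofD[OF assms(2)] assms(4) a b x by blast
  qed
  then show "a \<in> {x \<in> T. L x \<in> F}" "b \<in> {x \<in> T. L x \<in> F}"
    using a b by auto
qed

lemma strictly_convex_norm_midpoint_less:
  fixes x y :: "'x::real_normed_vector"
  assumes "strictly_convex_space TYPE('x)" "norm x = 1" "norm y \<le> 1" "x \<noteq> y"
  shows "norm (midpoint x y) < 1"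
proof -
  have "norm (midpoint x y) \<le> 1"
    using norm_triangle_ineq[of x y] assms(2,3) by (simp add: midpoint_def)
  moreover have "midpoint x y \<in> open_segment x y"
    using assms(4) by simp
  then have "norm (midpoint x y) \<noteq> 1"
    using assms unfolding strictly_convex_space_def extreme_point_of_def by fastforce
  ultimately show ?thesis
    by linarith
qed

lemma in_open_segment_extrapolate:
  fixes h u :: "'a::real_vector"
  assumes "\<epsilon> > 0" "u \<noteq> h"
  shows "h \<in> open_segment u ((1 + \<epsilon>) *\<^sub>R h - \<epsilon> *\<^sub>R u)"
proof -
  define \<theta> where "\<theta> = 1 / (1 + \<epsilon>)"
  have \<theta>_inverse: "\<theta> * (1 + \<epsilon>) = 1" and \<theta>_complement: "1 - \<theta> = \<theta> * \<epsilon>"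
    using assms(1) by (simp_all add: \<theta>_def field_simps)
  have "(1 - \<theta>) *\<^sub>R u + \<theta> *\<^sub>R ((1 + \<epsilon>) *\<^sub>R h - \<epsilon> *\<^sub>R u) = (\<theta> * (1 + \<epsilon>)) *\<^sub>R h"
    unfolding \<theta>_complement by (simp add: algebra_simps)
  then have "h = (1 - \<theta>) *\<^sub>R u + \<theta> *\<^sub>R ((1 + \<epsilon>) *\<^sub>R h - \<epsilon> *\<^sub>R u)"
    unfolding \<theta>_inverse by simp
  moreover have "(1 + \<epsilon>) *\<^sub>R h - \<epsilon> *\<^sub>R u - u = (1 + \<epsilon>) *\<^sub>R (h - u)"
    by (simp add: algebra_simps)
  then have "u \<noteq> (1 + \<epsilon>) *\<^sub>R h - \<epsilon> *\<^sub>R u"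
    using assms by auto
  moreover have "0 < \<theta>" "\<theta> < 1"
    using assms(1) by (auto simp: \<theta>_def)
  ultimately show ?thesis
    unfolding in_segment by blast
qed

lemma face_of_subspace_cball_subset_sphere:
  fixes V :: "'a::real_normed_vector set"
  assumes "subspace V" "F face_of (V \<inter> cball 0 r)" "F \<noteq> V \<inter> cball 0 r"
  shows "F \<subseteq> sphere 0 r"
proof
  fix h assume "h \<in> F"
  then have h: "h \<in> V" "norm h \<le> r"
    using face_of_imp_subset[OF assms(2)] by auto
  show "h \<in> sphere 0 r"
  proof (rule ccontr)
    assume "h \<notin> sphere 0 r"
    then have "norm h < r"
      using h by simp
    define \<epsilon> where "\<epsilon> = (r - norm h) / (r + norm h)"
    have "0 < r - norm h" "0 < r + norm h"
      using \<open>norm h < r\<close> norm_ge_zero[of h] by linarith+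
    then have "\<epsilon> > 0" and \<epsilon>_scaled: "\<epsilon> * (r + norm h) = r - norm h"
      by (simp_all add: \<epsilon>_def)
    have "V \<inter> cball 0 r \<subseteq> F"
    proof
      fix u assume u: "u \<in> V \<inter> cball 0 r"
      show "u \<in> F"
      proof (cases "u = h")
        case False
        define v where "v = (1 + \<epsilon>) *\<^sub>R h - \<epsilon> *\<^sub>R u"
        have "v \<in> V"
          using assms(1) h u by (simp add: v_def subspace_diff subspace_scale)
        have "norm v \<le> (1 + \<epsilon>) * norm h + \<epsilon> * norm u"
          using norm_triangle_ineq4[of "(1 + \<epsilon>) *\<^sub>R h" "\<epsilon> *\<^sub>R u"] \<open>\<epsilon> > 0\<close> by (simp add: v_def)
        also have "\<dots> \<le> (1 + \<epsilon>) * norm h + \<epsilon> * r"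
          using u \<open>\<epsilon> > 0\<close> by simp
        also have "\<dots> = r"
          using \<epsilon>_scaled by (simp add: algebra_simps)
        finally have "v \<in> V \<inter> cball 0 r"
          using \<open>v \<in> V\<close> by simp
        then show "u \<in> F"
          using face_ofD[OF assms(2) in_open_segment_extrapolate[OF \<open>\<epsilon> > 0\<close> False]] u \<open>h \<in> F\<close>
          by (simp add: v_def)
      qed (use \<open>h \<in> F\<close> in simp)
    qed
    then show False
      using assms(2,3) face_of_imp_subset by blast
  qed
qed

lemma C0_sphere_fibre_eq_C0_ball_fibre:
  fixes t0 :: "'k::topological_space" and x0 :: "'x::real_normed_vector"
  assumes "norm x0 = 1"
  shows "{f \<in> C0_sphere. apply_bcontfun f t0 = x0} = {f \<in> C0_ball. apply_bcontfun f t0 = x0}"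
proof -
  have "norm f = 1" if "f \<in> C0_ball" "apply_bcontfun f t0 = x0" for f :: "'k \<Rightarrow>\<^sub>C 'x"
    using that assms norm_bounded[of f t0] by (simp add: C0_ball_def)
  then show ?thesis
    by (auto simp: C0_sphere_def C0_ball_def)
qed

lemma norm_midpoint_scaled_le:
  fixes x y :: "'a::real_normed_vector"
  assumes "p \<in> {0..1}" "norm y \<le> 1" "c \<ge> 1/2" "p \<noteq> 0 \<Longrightarrow> norm (midpoint x y) \<le> c"
  shows "norm (midpoint (p *\<^sub>R x) y) \<le> c"
proof -
  have "midpoint (p *\<^sub>R x) y = p *\<^sub>R midpoint x y + (1 - p) *\<^sub>R ((1/2) *\<^sub>R y)"
    by (simp add: midpoint_def algebra_simps flip: scaleR_add_left) (simp add: field_simps)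
  moreover have "norm ((1/2) *\<^sub>R y) \<le> c"
    using assms(2,3) by simp
  ultimately show ?thesis
    using convexD[OF convex_cball, of "midpoint x y" 0 c "(1/2) *\<^sub>R y" p "1 - p"] assms(1,4)
    by (cases "p = 0") auto
qed

lemma convex_subset_C0_sphere_fixes_value:
  fixes t0 :: "'k::t2_space" and x0 :: "'x::real_normed_vector"
  assumes lc: "locally_compact_space (euclidean :: 'k topology)"
    and sc: "strictly_convex_space TYPE('x)" and x0: "norm x0 = 1"
    and G: "convex G" "G \<subseteq> C0_sphere" "{f \<in> (C0_sphere :: ('k \<Rightarrow>\<^sub>C 'x) set). apply_bcontfun f t0 = x0} \<subseteq> G"
    and "g \<in> G"
  shows "apply_bcontfun g t0 = x0"
proof (rule ccontr)
  assume "apply_bcontfun g t0 \<noteq> x0"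
  have g_le: "norm (apply_bcontfun g t) \<le> 1" for t
    using G(2) \<open>g \<in> G\<close> norm_bounded[of g t] by (auto simp: C0_sphere_def)
  define \<delta> where "\<delta> = (1 - norm (midpoint x0 (apply_bcontfun g t0))) / 2"
  have "\<delta> > 0"
    using strictly_convex_norm_midpoint_less[OF sc x0 g_le \<open>_ \<noteq> x0\<close>[symmetric]] by (simp add: \<delta>_def)
  have "1 - \<delta> \<ge> 1/2"
    by (simp add: \<delta>_def)
  define W where "W = {t. norm (midpoint x0 (apply_bcontfun g t)) < 1 - \<delta>}"
  have "open W"
    unfolding W_def midpoint_def by (intro open_Collect_less continuous_intros) auto
  moreover have "norm (midpoint x0 (apply_bcontfun g t0)) = 1 - 2 * \<delta>"
    by (simp add: \<delta>_def field_simps)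
  then have "t0 \<in> W"
    using \<open>\<delta> > 0\<close> by (simp add: W_def)
  ultimately obtain f \<phi> where f: "f \<in> C0_sphere" "apply_bcontfun f = (\<lambda>t. \<phi> t *\<^sub>R x0)"
    "\<phi> t0 = 1" "\<And>t. \<phi> t \<in> {0..1}" "\<And>t. t \<notin> W \<Longrightarrow> \<phi> t = 0"
    using C0_sphere_bump[OF lc _ _ x0] by metis
  have "f \<in> G"
    using G(3) f(1-3) by auto
  then have "midpoint f g \<in> G"
    using convexD[OF G(1) _ \<open>g \<in> G\<close>, of f "1/2" "1/2"] by (simp add: midpoint_def scaleR_add_right)
  then have "norm (midpoint f g) = 1"
    using G(2) by (auto simp: C0_sphere_def)
  moreover have "norm (midpoint f g) \<le> 1 - \<delta>"
  proof (rule norm_bound)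
    fix t
    have "norm (midpoint (\<phi> t *\<^sub>R x0) (apply_bcontfun g t)) \<le> 1 - \<delta>"
      using f(4,5) g_le \<open>1 - \<delta> \<ge> 1/2\<close> by (intro norm_midpoint_scaled_le) (force simp: W_def)+
    then show "norm (apply_bcontfun (midpoint f g) t) \<le> 1 - \<delta>"
      by (simp add: midpoint_def f(2))
  qed
  ultimately show False
    using \<open>\<delta> > 0\<close> by simp
qed

lemma face_of_C0_ball_eval_fibre:
  fixes t0 :: "'k::topological_space" and x0 :: "'x::real_normed_vector"
  assumes "strictly_convex_space TYPE('x)" "norm x0 = 1"
  shows "{f \<in> C0_ball. apply_bcontfun f t0 = x0} face_of C0_ball"
proof -
  have "{f \<in> C0_ball. apply_bcontfun f t0 \<in> {x0}} face_of C0_ball"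
  proof (rule face_of_linear_preimage)
    show "linear (\<lambda>f :: 'k \<Rightarrow>\<^sub>C 'x. apply_bcontfun f t0)"
      using bounded_linear_apply_bcontfun_at bounded_linear.linear by blast
    show "{x0} face_of cball 0 1"
      using assms by (simp add: face_of_singleton strictly_convex_space_def)
    show "convex (C0_ball :: ('k \<Rightarrow>\<^sub>C 'x) set)"
      unfolding C0_ball_def using subspace_C0 by (intro convex_Int subspace_imp_convex convex_cball)
    show "(\<lambda>f. apply_bcontfun f t0) ` C0_ball \<subseteq> cball 0 1"
      using norm_bounded order_trans by (fastforce simp: C0_ball_def)
  qed
  then show ?thesis
    by simp
qed

lemma closedin_C0_eval_fibre:
  fixes t0 :: "'k::topological_space" and x0 :: "'x::real_normed_vector"
  shows "closedin (top_of_set C0) {f \<in> C0_ball. apply_bcontfun f t0 = x0}"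
proof -
  have "{f \<in> C0_ball. apply_bcontfun f t0 = x0} = C0 \<inter> (cball 0 1 \<inter> {f. apply_bcontfun f t0 = x0})"
    by (auto simp: C0_ball_def)
  moreover have "continuous_on UNIV (\<lambda>f :: 'k \<Rightarrow>\<^sub>C 'x. apply_bcontfun f t0)"
    by (simp add: bounded_linear_apply_bcontfun_at linear_continuous_on)
  ultimately show ?thesis
    by (simp add: closedin_closed_Int closed_Int closed_Collect_eq)
qed

lemma closed_proper_face_C0_sphere_eval_fibre:
  fixes t0 :: "'k::t2_space" and x0 :: "'x::real_normed_vector"
  assumes lc: "locally_compact_space (euclidean :: 'k topology)"
    and "strictly_convex_space TYPE('x)" and x0: "norm x0 = 1"
  shows "closed_proper_face {f \<in> (C0_sphere :: ('k \<Rightarrow>\<^sub>C 'x) set). apply_bcontfun f t0 = x0}"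
proof -
  obtain f \<phi> where "f \<in> C0_sphere" "apply_bcontfun f = (\<lambda>t. \<phi> t *\<^sub>R x0)" "\<phi> t0 = 1"
    by (rule C0_sphere_bump[OF lc open_UNIV UNIV_I x0]) (rule that)
  then have "f \<in> {f \<in> C0_sphere. apply_bcontfun f t0 = x0}"
    by simp
  moreover have "0 \<in> C0_ball" "0 \<notin> {f \<in> C0_sphere. apply_bcontfun f t0 = x0}"
    using subspace_0[OF subspace_C0] by (simp_all add: C0_sphere_def C0_ball_def)
  ultimately show ?thesis
    using face_of_C0_ball_eval_fibre[OF assms(2,3)] closedin_C0_eval_fibre
    unfolding closed_proper_face_def C0_sphere_fibre_eq_C0_ball_fibre[OF x0] by blast
qed

lemma closed_proper_face_subset_C0_sphere:
  assumes "closed_proper_face G"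
  shows "convex G" "G \<subseteq> C0_sphere"
proof -
  have "G face_of C0_ball" "G \<noteq> C0_ball"
    using assms by (auto simp: closed_proper_face_def)
  then show "convex G" "G \<subseteq> C0_sphere"
    using face_of_subspace_cball_subset_sphere[OF subspace_C0, of G 1] face_of_imp_subset
    by (auto simp: C0_ball_def C0_sphere_def face_of_imp_convex)
qed

theorem lemma2p11:
  fixes t0 :: "'k::t2_space" and x0 :: "'x::banach"
  assumes "locally_compact_space (euclidean :: 'k topology)"
    and "strictly_convex_space TYPE('x)"
    and "norm x0 = 1"
  defines "A \<equiv> {f \<in> (C0_sphere :: ('k \<Rightarrow>\<^sub>C 'x) set). apply_bcontfun f t0 = x0}"
  shows "maximal_closed_proper_face A \<and> maximal_convex_subset_of_sphere A"
proof -
  have "closed_proper_face A"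
    unfolding A_def using assms(1-3) by (rule closed_proper_face_C0_sphere_eval_fibre)
  then have "convex A" "A \<subseteq> C0_sphere"
    by (rule closed_proper_face_subset_C0_sphere)+
  have maximal_convex: "G = A" if "convex G" "G \<subseteq> C0_sphere" "A \<subseteq> G" for G
    using that convex_subset_C0_sphere_fixes_value[OF assms(1-3) that[unfolded A_def]]
    by (auto simp: A_def)
  then have "G = A" if "closed_proper_face G" "A \<subseteq> G" for G
    using that closed_proper_face_subset_C0_sphere by blast
  then show ?thesis
    unfolding maximal_closed_proper_face_def maximal_convex_subset_of_sphere_def
    using \<open>closed_proper_face A\<close> \<open>convex A\<close> \<open>A \<subseteq> C0_sphere\<close> maximal_convex by blast
qed

end
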